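(* Let $G$ be a group, $A$ a semilattice of groups, and $\Theta=(\theta,w)$, $\Theta'=(\theta',w')$ twisted partial actions of $G$ on $A$. If $\Theta$ is equivalent to $\Theta'$, then the corresponding twisted $E(A)*_\theta G$-module structures $\Lambda=\Lambda^\Theta$ and $\Lambda'=\Lambda^{\Theta'}$ on $A$ are equivalent.
   Context: A semilattice of groups is an inverse semigroup $A$ with central idempotents; $A_e=\{a: aa^{-1}=a^{-1}a=e\}$. Multipliers of a semigroup $T$: pairs $(L,R)$ of maps $T\to T$ with $L(st)=L(s)t$, $R(st)=sR(t)$, $sL(t)=R(s)t$, written $ws=L(s)$, $sw=R(s)$; monoid $\mathcal M(T)$, unit group $\mathcal U(\mathcal M(T))$. A twisted partial action of $G$ on $A$ is $(\theta,w)$ with isomorphisms $\theta_x:D_{x^{-1}}\to D_x$ of nonempty ideals and $w_{x,y}\in\mathcal U(\mathcal M(D_xD_{xy}))$ such that (i) $D_x^2=D_x$, $D_xD_y=D_yD_x$; (ii) $D_1=A$, $\theta_1=\mathrm{id}$; (iii) $\theta_x(D_{x^{-1}}D_y)=D_xD_{xy}$; (iv) $\theta_x\theta_y(s)=w_{x,y}\theta_{xy}(s)w_{x,y}^{-1}$ on $D_{y^{-1}}D_{y^{-1}x^{-1}}$; (v) $w_{1,x}=w_{x,1}$ = identity of $D_x$; (vi) $\theta_x(sw_{y,z})w_{x,yz}=\theta_x(s)w_{x,y}w_{xy,z}$ on $D_{x^{-1}}D_yD_{yz}$. $(\theta,w)$ and $(\theta',w')$ are equivalent if $D'_x=D_x$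 and there are $\varepsilon_x\in\mathcal U(\mathcal M(D_x))$ with $\theta'_x(s)=\varepsilon_x\theta_x(s)\varepsilon_x^{-1}$ ($s\in D_{x^{-1}}$) and $\theta'_x(s)w'_{x,y}\varepsilon_{xy}=\varepsilon_x\theta_x(s\varepsilon_y)w_{x,y}$ ($s\in D_{x^{-1}}D_y$). The maps $\theta_x$ restrict to a partial action $\theta$ of $G$ on $E(A)$; equivalent twisted partial actions have the same restriction, so $E(A)*_\theta G=E(A)*_{\theta'}G=\{e\delta_x: e\in E(D_x)\}$ with product $e\delta_x\cdot f\delta_y=\theta_x(\theta_x^{-1}(e)f)\delta_{xy}$ (an $E$-unitary inverse semigroup). $\Lambda^\Theta=(\alpha,\lambda,f)$ is given by $\alpha(e\delta_1)=e$, $\lambda_{e\delta_x}(a)=\theta_x(\theta_x^{-1}(e)a)$, $f(e\delta_x,e'\delta_y)=\theta_x(\theta_x^{-1}(e)e')w_{x,y}$ (and similarly for $\Theta'$). Two twisted module structures $(\alpha,\lambda,f)$, $(\alpha',\lambda',f')$ over an inverse semigroup $S$ are equivalent if $\alpha'=\alpha$ and there is $g:S\to A$ with $g(s)\in A_{\alpha(ss^{-1})}$, $\lambda'_s(a)=g(s)\lambda_s(a)g(s)^{-1}$ and $f'(s,t)g(st)=g(s)\lambda_s(g(t))f(s,t)$. *)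

theory Defs
  imports Main
begin

definition inverse_semigroup :: "'a::semigroup_mult itself \<Rightarrow> bool" where
  "inverse_semigroup _ \<longleftrightarrow> (\<forall>a::'a. \<exists>!b. a * b * a = a \<and> b * a * b = b)"

definition ainv :: "'a::semigroup_mult \<Rightarrow> 'a" where
  "ainv a = (THE b. a * b * a = a \<and> b * a * b = b)"

definition idem :: "'a::semigroup_mult \<Rightarrow> bool" where
  "idem e \<longleftrightarrow> e * e = e"

definition semilattice_of_groups :: "'a::semigroup_mult itself \<Rightarrow> bool" where
  "semilattice_of_groups T \<longleftrightarrow> inverse_semigroup T \<and>
     (\<forall>e a::'a. idem e \<longrightarrow> e * a = a * e)"

definition Agrp :: "'a::semigroup_mult \<Rightarrow> 'a set" where
  "Agrp e = {a. a * ainv a = e \<and> ainv a * a = e}"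

definition setmul :: "'a::semigroup_mult set \<Rightarrow> 'a set \<Rightarrow> 'a set" (infixl "\<cdot>" 70) where
  "X \<cdot> Y = {a * b | a b. a \<in> X \<and> b \<in> Y}"

definition is_ideal :: "'a::semigroup_mult set \<Rightarrow> bool" where
  "is_ideal I \<longleftrightarrow> I \<noteq> {} \<and> (\<forall>a s. s \<in> I \<longrightarrow> a * s \<in> I \<and> s * a \<in> I)"

text \<open>A multiplier w of T is a pair (L,R); w s = L s and s w = R s.\<close>
type_synonym 'a mult = "('a \<Rightarrow> 'a) \<times> ('a \<Rightarrow> 'a)"

abbreviation mL :: "'a mult \<Rightarrow> 'a \<Rightarrow> 'a" where "mL \<equiv> fst"
abbreviation mR :: "'a mult \<Rightarrow> 'a \<Rightarrow> 'a" where "mR \<equiv> snd"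

definition is_multiplier :: "'a::semigroup_mult set \<Rightarrow> 'a mult \<Rightarrow> bool" where
  "is_multiplier T m \<longleftrightarrow>
     (\<forall>s\<in>T. mL m s \<in> T \<and> mR m s \<in> T) \<and>
     (\<forall>s\<in>T. \<forall>t\<in>T. mL m (s * t) = mL m s * t \<and> mR m (s * t) = s * mR m t
                    \<and> s * mL m t = mR m s * t)"

text \<open>m' is an inverse of m in the monoid M(T) (product (L,R)(L',R') = (L o L', R' o R)).\<close>
definition mult_inverse_of :: "'a::semigroup_mult set \<Rightarrow> 'a mult \<Rightarrow> 'a mult \<Rightarrow> bool" where
  "mult_inverse_of T m m' \<longleftrightarrow> is_multiplier T m' \<and>
     (\<forall>s\<in>T. mL m (mL m' s) = s \<and> mL m' (mL m s) = s \<and>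
             mR m (mR m' s) = s \<and> mR m' (mR m s) = s)"

definition unit_multiplier :: "'a::semigroup_mult set \<Rightarrow> 'a mult \<Rightarrow> bool" where
  "unit_multiplier T m \<longleftrightarrow> is_multiplier T m \<and> (\<exists>m'. mult_inverse_of T m m')"

definition minv :: "'a::semigroup_mult set \<Rightarrow> 'a mult \<Rightarrow> 'a mult" where
  "minv T m = (SOME m'. mult_inverse_of T m m')"

section \<open>Twisted partial actions (group G written additively: 0 unit, + product, - inverse)\<close>

definition twisted_partial_action ::
  "('g::group_add \<Rightarrow> 'a::semigroup_mult set) \<Rightarrow> ('g \<Rightarrow> 'a \<Rightarrow> 'a) \<Rightarrow> ('g \<Rightarrow> 'g \<Rightarrow> 'a mult) \<Rightarrow> bool" where
  "twisted_partial_action D \<theta> w \<longleftrightarrow>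
     (\<forall>x. is_ideal (D x)) \<and>
     (\<forall>x. bij_betw (\<theta> x) (D (- x)) (D x) \<and>
          (\<forall>s\<in>D (- x). \<forall>t\<in>D (- x). \<theta> x (s * t) = \<theta> x s * \<theta> x t)) \<and>
     (\<forall>x y. unit_multiplier (D x \<cdot> D (x + y)) (w x y)) \<and>
     (\<forall>x. D x \<cdot> D x = D x) \<and> (\<forall>x y. D x \<cdot> D y = D y \<cdot> D x) \<and>
     D 0 = UNIV \<and> (\<forall>s. \<theta> 0 s = s) \<and>
     (\<forall>x y. \<theta> x ` (D (- x) \<cdot> D y) = D x \<cdot> D (x + y)) \<and>
     (\<forall>x y. \<forall>s \<in> D (- y) \<cdot> D (- y + - x).
        \<theta> x (\<theta> y s) = mR (minv (D x \<cdot> D (x + y)) (w x y)) (mL (w x y) (\<theta> (x + y) s))) \<and>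
     (\<forall>x. \<forall>s\<in>D x. mL (w 0 x) s = s \<and> mR (w 0 x) s = s \<and>
                   mL (w x 0) s = s \<and> mR (w x 0) s = s) \<and>
     (\<forall>x y z. \<forall>s \<in> D (- x) \<cdot> D y \<cdot> D (y + z).
        mR (w x (y + z)) (\<theta> x (mR (w y z) s)) = mR (w (x + y) z) (mR (w x y) (\<theta> x s)))"

definition twisted_equivalent ::
  "('g::group_add \<Rightarrow> 'a::semigroup_mult set) \<Rightarrow> ('g \<Rightarrow> 'a \<Rightarrow> 'a) \<Rightarrow> ('g \<Rightarrow> 'g \<Rightarrow> 'a mult) \<Rightarrow>
   ('g \<Rightarrow> 'a set) \<Rightarrow> ('g \<Rightarrow> 'a \<Rightarrow> 'a) \<Rightarrow> ('g \<Rightarrow> 'g \<Rightarrow> 'a mult) \<Rightarrow> bool" where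
  "twisted_equivalent D \<theta> w D' \<theta>' w' \<longleftrightarrow> D' = D \<and>
     (\<exists>\<epsilon>. (\<forall>x. unit_multiplier (D x) (\<epsilon> x)) \<and>
         (\<forall>x. \<forall>s\<in>D (- x). \<theta>' x s = mR (minv (D x) (\<epsilon> x)) (mL (\<epsilon> x) (\<theta> x s))) \<and>
         (\<forall>x y. \<forall>s\<in>D (- x) \<cdot> D y.
            mR (\<epsilon> (x + y)) (mR (w' x y) (\<theta>' x s)) =
            mR (w x y) (mL (\<epsilon> x) (\<theta> x (mR (\<epsilon> y) s)))))"

definition thinv :: "('g::group_add \<Rightarrow> 'a set) \<Rightarrow> ('g \<Rightarrow> 'a \<Rightarrow> 'a) \<Rightarrow> 'g \<Rightarrow> 'a \<Rightarrow> 'a" where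
  "thinv D \<theta> x = inv_into (D (- x)) (\<theta> x)"

text \<open>Element e delta_x is represented as the pair (e, x).\<close>
definition skew :: "('g::group_add \<Rightarrow> 'a::semigroup_mult set) \<Rightarrow> ('a \<times> 'g) set" where
  "skew D = {(e, x). e \<in> D x \<and> idem e}"

definition smul :: "('g::group_add \<Rightarrow> 'a::semigroup_mult set) \<Rightarrow> ('g \<Rightarrow> 'a \<Rightarrow> 'a) \<Rightarrow>
    'a \<times> 'g \<Rightarrow> 'a \<times> 'g \<Rightarrow> 'a \<times> 'g" where
  "smul D \<theta> s t = (\<theta> (snd s) (thinv D \<theta> (snd s) (fst s) * fst t), snd s + snd t)"

definition sinv :: "('g::group_add \<Rightarrow> 'a::semigroup_mult set) \<Rightarrow> ('g \<Rightarrow> 'a \<Rightarrow> 'a) \<Rightarrow>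
    'a \<times> 'g \<Rightarrow> 'a \<times> 'g" where
  "sinv D \<theta> s = (THE t. t \<in> skew D \<and> smul D \<theta> (smul D \<theta> s t) s = s \<and> smul D \<theta> (smul D \<theta> t s) t = t)"

definition Lalpha :: "'a \<times> 'g \<Rightarrow> 'a" where
  "Lalpha s = fst s"

definition Llambda :: "('g::group_add \<Rightarrow> 'a::semigroup_mult set) \<Rightarrow> ('g \<Rightarrow> 'a \<Rightarrow> 'a) \<Rightarrow>
    'a \<times> 'g \<Rightarrow> 'a \<Rightarrow> 'a" where
  "Llambda D \<theta> s a = \<theta> (snd s) (thinv D \<theta> (snd s) (fst s) * a)"

definition Lf :: "('g::group_add \<Rightarrow> 'a::semigroup_mult set) \<Rightarrow> ('g \<Rightarrow> 'a \<Rightarrow> 'a) \<Rightarrow> ('g \<Rightarrow> 'g \<Rightarrow> 'a mult) \<Rightarrow>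
    'a \<times> 'g \<Rightarrow> 'a \<times> 'g \<Rightarrow> 'a" where
  "Lf D \<theta> w s t = mR (w (snd s) (snd t)) (\<theta> (snd s) (thinv D \<theta> (snd s) (fst s) * fst t))"

definition tmod_equivalent ::
  "'s set \<Rightarrow> ('s \<Rightarrow> 's \<Rightarrow> 's) \<Rightarrow> ('s \<Rightarrow> 's) \<Rightarrow>
   ('s \<Rightarrow> 'a::semigroup_mult) \<Rightarrow> ('s \<Rightarrow> 'a \<Rightarrow> 'a) \<Rightarrow> ('s \<Rightarrow> 's \<Rightarrow> 'a) \<Rightarrow>
   ('s \<Rightarrow> 'a) \<Rightarrow> ('s \<Rightarrow> 'a \<Rightarrow> 'a) \<Rightarrow> ('s \<Rightarrow> 's \<Rightarrow> 'a) \<Rightarrow> bool" where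
  "tmod_equivalent S mul sinv' \<alpha> lam f \<alpha>' lam' f' \<longleftrightarrow>
     (\<forall>s\<in>S. \<alpha>' s = \<alpha> s) \<and>
     (\<exists>g. (\<forall>s\<in>S. g s \<in> Agrp (\<alpha> (mul s (sinv' s)))) \<and>
          (\<forall>s\<in>S. \<forall>a. lam' s a = g s * lam s a * ainv (g s)) \<and>
          (\<forall>s\<in>S. \<forall>t\<in>S. f' s t * g (mul s t) = g s * lam s (g t) * f s t))"

end

theory Submission
  imports Defs
begin

text \<open>
  The gauge is g(e \<delta>x) = \<epsilon>x e. Because idempotents are central, a unit multiplier \<epsilon>
  of an ideal acts at an idempotent e like an element of A_e: \<epsilon> e lies in A_e with
  inverse \<epsilon>^-1 e, and \<epsilon> u \<epsilon>^-1 = (\<epsilon> e) u (\<epsilon>^-1 e) whenever e u = u. Hence the relation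
  \<theta>'x = \<epsilon>x \<theta>x \<epsilon>x^-1 turns \<lambda>' into the conjugate of \<lambda> by g, and the relation between w'
  and w becomes the coboundary relation between f' and f. Finally (e \<delta>x)^-1 = \<theta>x^-1(e) \<delta>(-x),
  so \<alpha>(s s^-1) = e.
\<close>

lemma setmulI: "a \<in> X \<Longrightarrow> b \<in> Y \<Longrightarrow> a * b \<in> X \<cdot> Y"
  unfolding setmul_def by blast

lemma setmul_subset_right: "is_ideal Y \<Longrightarrow> X \<cdot> Y \<subseteq> Y"
  unfolding setmul_def is_ideal_def by blast

lemma setmul_subset_left: "is_ideal X \<Longrightarrow> X \<cdot> Y \<subseteq> X"
  unfolding setmul_def is_ideal_def by blast

lemma setmul_mult_left_closed:
  assumes "is_ideal X" and "v \<in> X \<cdot> Y"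
  shows "a * v \<in> X \<cdot> Y"
proof -
  obtain p q where "v = p * q" "p \<in> X" "q \<in> Y"
    using assms(2) unfolding setmul_def by blast
  moreover have "a * p \<in> X"
    using assms(1) \<open>p \<in> X\<close> unfolding is_ideal_def by blast
  ultimately show ?thesis
    using setmulI[of "a * p" X q Y] by (simp add: mult.assoc)
qed

lemma ainv_unique:
  assumes "inverse_semigroup TYPE('a::semigroup_mult)" and "(a::'a) * b * a = a" and "b * a * b = b"
  shows "ainv a = b"
proof -
  have "\<exists>!b. a * b * a = a \<and> b * a * b = b"
    using assms(1) unfolding inverse_semigroup_def by blast
  then show ?thesis
    unfolding ainv_def using assms(2,3) by (simp add: the1_equality)
qed

lemma unit_multiplier_minv:
  assumes "unit_multiplier T m"
  shows "is_multiplier T m" and "mult_inverse_of T m (minv T m)" and "is_multiplier T (minv T m)"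
proof -
  show "is_multiplier T m"
    using assms unfolding unit_multiplier_def by blast
  show inv: "mult_inverse_of T m (minv T m)"
    using assms unfolding unit_multiplier_def minv_def by (metis someI_ex)
  then show "is_multiplier T (minv T m)"
    unfolding mult_inverse_of_def by blast
qed

lemma multiplier_closed:
  assumes "is_multiplier T m" and "s \<in> T"
  shows "mL m s \<in> T" and "mR m s \<in> T"
  using assms unfolding is_multiplier_def by blast+

lemma multiplier_mL_mult:
  assumes "is_multiplier T m" and "s \<in> T" and "t \<in> T"
  shows "mL m (s * t) = mL m s * t"
  using assms unfolding is_multiplier_def by blast

lemma multiplier_mR_mult:
  assumes "is_multiplier T m" and "s \<in> T" and "t \<in> T"
  shows "mR m (s * t) = s * mR m t"
  using assms unfolding is_multiplier_def by blast

lemma multiplier_middle: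
  assumes "is_multiplier T m" and "s \<in> T" and "t \<in> T"
  shows "s * mL m t = mR m s * t"
  using assms unfolding is_multiplier_def by blast

definition skew_gauge :: "('g \<Rightarrow> 'a mult) \<Rightarrow> 'a \<times> 'g \<Rightarrow> 'a" where
  "skew_gauge \<epsilon> s = mL (\<epsilon> (snd s)) (fst s)"

context
  assumes idem_central: "\<And>e a::'a::semigroup_mult. idem e \<Longrightarrow> e * a = a * e"
begin

lemma idem_mult:
  fixes a b :: 'a
  assumes "idem a" and "idem b"
  shows "idem (a * b)"
proof -
  have "a * b * (a * b) = a * (b * a) * b"
    by (simp add: mult.assoc)
  also have "\<dots> = (a * a) * (b * b)"
    using idem_central[OF assms(2), of a] by (simp add: mult.assoc)
  finally show ?thesis
    using assms unfolding idem_def by simp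
qed

lemma multiplier_idem_absorb:
  fixes T :: "'a set"
  assumes m: "is_multiplier T m" and e: "e \<in> T" "idem e"
  shows "mL m e * e = mL m e" and "e * mL m e = mL m e"
proof -
  show "mL m e * e = mL m e"
    using multiplier_mL_mult[OF m e(1) e(1)] e(2) unfolding idem_def by simp
  then show "e * mL m e = mL m e"
    using idem_central[OF e(2)] by metis
qed

lemma multiplier_right_idem:
  fixes T :: "'a set"
  assumes m: "is_multiplier T m" and e: "e \<in> T" "idem e"
  shows "mR m e = mL m e"
proof -
  have "mR m e = e * mR m e"
    using multiplier_mR_mult[OF m e(1) e(1)] e(2) unfolding idem_def by simp
  also have "\<dots> = mR m e * e"
    using idem_central[OF e(2)] by metis
  also have "\<dots> = e * mL m e"
    using multiplier_middle[OF m e(1) e(1)] by simp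
  also have "\<dots> = mL m e"
    by (rule multiplier_idem_absorb(2)[OF m e])
  finally show ?thesis .
qed

lemma multiplier_idem_swap:
  fixes T :: "'a set"
  assumes m: "is_multiplier T m" and "a \<in> T" and k: "k \<in> T" "idem k"
  shows "a * mR m k = mR m a * k"
  using multiplier_middle[OF m \<open>a \<in> T\<close> k(1)] multiplier_right_idem[OF m k] by simp

lemma multiplier_right_mult_idem:
  fixes T :: "'a set"
  assumes m: "is_multiplier T m" and f: "f \<in> T" "idem f" and "a * f \<in> T"
  shows "mR m (a * f) = a * mL m f"
proof -
  have "mR m (a * f) = mR m (a * f * f)"
    using f(2) unfolding idem_def by (simp add: mult.assoc)
  also have "\<dots> = a * (f * mL m f)"
    using multiplier_mR_mult[OF m \<open>a * f \<in> T\<close> f(1)] multiplier_right_idem[OF m f]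
    by (simp add: mult.assoc)
  finally show ?thesis
    using multiplier_idem_absorb(2)[OF m f] by simp
qed

lemma unit_multiplier_idem_inverse:
  fixes T :: "'a set"
  assumes u: "unit_multiplier T m" and e: "e \<in> T" "idem e"
  shows "mL m e * mL (minv T m) e = e" and "mL (minv T m) e * mL m e = e"
proof -
  note m = unit_multiplier_minv(1)[OF u] and inv = unit_multiplier_minv(2)[OF u]
    and m' = unit_multiplier_minv(3)[OF u]
  have "mL m e * mL (minv T m) e = mL m (e * mL (minv T m) e)"
    using multiplier_mL_mult[OF m e(1) multiplier_closed(1)[OF m' e(1)]] by simp
  also have "\<dots> = e"
    using multiplier_idem_absorb(2)[OF m' e] inv e(1) unfolding mult_inverse_of_def by simp
  finally show "mL m e * mL (minv T m) e = e" .
  have "mL (minv T m) e * mL m e = mL (minv T m) (e * mL m e)"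
    using multiplier_mL_mult[OF m' e(1) multiplier_closed(1)[OF m e(1)]] by simp
  also have "\<dots> = e"
    using multiplier_idem_absorb(2)[OF m e] inv e(1) unfolding mult_inverse_of_def by simp
  finally show "mL (minv T m) e * mL m e = e" .
qed

lemma unit_multiplier_conj:
  fixes T :: "'a set"
  assumes u: "unit_multiplier T m" and e: "e \<in> T" "idem e" and v: "v \<in> T" "e * v = v"
  shows "mR (minv T m) (mL m v) = mL m e * v * mL (minv T m) e"
proof -
  note m = unit_multiplier_minv(1)[OF u] and m' = unit_multiplier_minv(3)[OF u]
  have "mL m v = mL m e * v"
    using multiplier_mL_mult[OF m e(1) v(1)] v(2) by simp
  moreover have "mR (minv T m) v = v * mL (minv T m) e"
    using multiplier_mR_mult[OF m' v(1) e(1)] multiplier_right_idem[OF m' e]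
      idem_central[OF e(2), of v] v(2) by simp
  ultimately show ?thesis
    using multiplier_mR_mult[OF m' multiplier_closed(1)[OF m e(1)] v(1)] by (simp add: mult.assoc)
qed

lemma unit_multiplier_idem_fixed:
  fixes T :: "'a set"
  assumes u: "unit_multiplier T m" and e: "e \<in> T" "idem e"
  shows "mR (minv T m) (mL m e) = e"
  using unit_multiplier_conj[OF u e e(1)] e(2) unit_multiplier_idem_inverse(1)[OF u e]
    multiplier_idem_absorb(1)[OF unit_multiplier_minv(1)[OF u] e]
  unfolding idem_def by metis

lemma ainv_unit_multiplier_idem:
  fixes T :: "'a set"
  assumes "inverse_semigroup TYPE('a)" and u: "unit_multiplier T m" and e: "e \<in> T" "idem e"
  shows "ainv (mL m e) = mL (minv T m) e"
proof (rule ainv_unique[OF assms(1)])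
  note inv = unit_multiplier_idem_inverse[OF u e]
  show "mL m e * mL (minv T m) e * mL m e = mL m e"
    using inv(1) multiplier_idem_absorb(2)[OF unit_multiplier_minv(1)[OF u] e] by simp
  show "mL (minv T m) e * mL m e * mL (minv T m) e = mL (minv T m) e"
    using inv(2) multiplier_idem_absorb(2)[OF unit_multiplier_minv(3)[OF u] e] by simp
qed

lemma unit_multiplier_idem_Agrp:
  fixes T :: "'a set"
  assumes "inverse_semigroup TYPE('a)" and u: "unit_multiplier T m" and e: "e \<in> T" "idem e"
  shows "mL m e \<in> Agrp e"
  unfolding Agrp_def
  using ainv_unit_multiplier_idem[OF assms] unit_multiplier_idem_inverse[OF u e] by simp

context
  fixes D :: "'g::group_add \<Rightarrow> 'a set" and \<theta> :: "'g \<Rightarrow> 'a \<Rightarrow> 'a" and w :: "'g \<Rightarrow> 'g \<Rightarrow> 'a mult"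
  assumes tpa: "twisted_partial_action D \<theta> w"
begin

lemma tpa_ideal: "is_ideal (D x)"
  using tpa unfolding twisted_partial_action_def by (elim conjE) blast

lemma tpa_bij: "bij_betw (\<theta> x) (D (- x)) (D x)"
  using tpa unfolding twisted_partial_action_def by (elim conjE) blast

lemma tpa_hom: "s \<in> D (- x) \<Longrightarrow> t \<in> D (- x) \<Longrightarrow> \<theta> x (s * t) = \<theta> x s * \<theta> x t"
  using tpa unfolding twisted_partial_action_def by (elim conjE) blast

lemma tpa_unit: "unit_multiplier (D x \<cdot> D (x + y)) (w x y)"
  using tpa unfolding twisted_partial_action_def by (elim conjE) blast

lemma tpa_D_zero: "D 0 = UNIV"
  using tpa unfolding twisted_partial_action_def by (elim conjE) blast

lemma tpa_theta_zero: "\<theta> 0 s = s"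
  using tpa unfolding twisted_partial_action_def by (elim conjE) blast

lemma tpa_image: "\<theta> x ` (D (- x) \<cdot> D y) = D x \<cdot> D (x + y)"
  using tpa unfolding twisted_partial_action_def by (elim conjE) blast

lemma tpa_compose:
  "s \<in> D (- y) \<cdot> D (- y + - x) \<Longrightarrow>
   \<theta> x (\<theta> y s) = mR (minv (D x \<cdot> D (x + y)) (w x y)) (mL (w x y) (\<theta> (x + y) s))"
  using tpa unfolding twisted_partial_action_def by (elim conjE) blast

lemma tpa_mult_closed: "a \<in> D x \<Longrightarrow> b * a \<in> D x" "a \<in> D x \<Longrightarrow> a * b \<in> D x"
  using tpa_ideal unfolding is_ideal_def by blast+

lemma theta_in: "u \<in> D (- x) \<Longrightarrow> \<theta> x u \<in> D x"
  using bij_betw_apply[OF tpa_bij] .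

lemma theta_inj_on: "inj_on (\<theta> x) (D (- x))"
  using bij_betw_imp_inj_on[OF tpa_bij] .

lemma thinv_in: "e \<in> D x \<Longrightarrow> thinv D \<theta> x e \<in> D (- x)"
  unfolding thinv_def using bij_betw_imp_surj_on[OF tpa_bij] by (metis inv_into_into)

lemma theta_thinv: "e \<in> D x \<Longrightarrow> \<theta> x (thinv D \<theta> x e) = e"
  unfolding thinv_def using bij_betw_imp_surj_on[OF tpa_bij] by (metis f_inv_into_f)

lemma thinv_theta: "u \<in> D (- x) \<Longrightarrow> thinv D \<theta> x (\<theta> x u) = u"
  unfolding thinv_def using theta_inj_on by (rule inv_into_f_f)

lemma thinv_zero: "thinv D \<theta> 0 k = k"
  using thinv_theta[of k 0] tpa_D_zero tpa_theta_zero by simp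

lemma idem_theta: "u \<in> D (- x) \<Longrightarrow> idem u \<Longrightarrow> idem (\<theta> x u)"
  unfolding idem_def using tpa_hom[of u x u] by simp

lemma idem_thinv:
  assumes "e \<in> D x" and "idem e"
  shows "idem (thinv D \<theta> x e)"
proof -
  let ?e = "thinv D \<theta> x e"
  have "\<theta> x (?e * ?e) = \<theta> x ?e"
    using tpa_hom thinv_in theta_thinv assms unfolding idem_def by metis
  then show ?thesis
    using inj_onD[OF theta_inj_on] tpa_mult_closed thinv_in[OF assms(1)] unfolding idem_def by blast
qed

text \<open>By axiom (iv), \<theta>(-x) \<circ> \<theta>(x) is conjugation by the unit w(-x, x), which fixes idempotents.\<close>
lemma theta_minus_theta_idem:
  assumes u: "u \<in> D (- x)" "idem u"
  shows "\<theta> (- x) (\<theta> x u) = u"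
proof -
  let ?T = "D (- x) \<cdot> D (- x + x)"
  have "u \<in> ?T"
    using setmulI[OF u(1), of u "D (- x + x)"] u(2) tpa_D_zero unfolding idem_def by simp
  then have "\<theta> (- x) (\<theta> x u) = mR (minv ?T (w (- x) x)) (mL (w (- x) x) (\<theta> 0 u))"
    using tpa_compose[of u x "- x"] by simp
  also have "\<dots> = u"
    using unit_multiplier_idem_fixed[OF tpa_unit \<open>u \<in> ?T\<close> u(2)] tpa_theta_zero by simp
  finally show ?thesis .
qed

lemma thinv_idem:
  assumes "e \<in> D x" and "idem e"
  shows "thinv D \<theta> x e = \<theta> (- x) e"
  using theta_minus_theta_idem[OF thinv_in idem_thinv] theta_thinv assms by metis

lemma Llambda_idem_absorb:
  assumes "e \<in> D x" and "idem e"
  shows "e * Llambda D \<theta> (e, x) a = Llambda D \<theta> (e, x) a"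
proof -
  let ?e = "thinv D \<theta> x e"
  have "e * \<theta> x (?e * a) = \<theta> x (?e * (?e * a))"
    using tpa_hom[OF thinv_in[OF assms(1)] tpa_mult_closed(2)[OF thinv_in[OF assms(1)]]]
      theta_thinv[OF assms(1)] by simp
  also have "?e * (?e * a) = ?e * a"
    using idem_thinv[OF assms] unfolding idem_def by (simp add: mult.assoc[symmetric])
  finally show ?thesis
    unfolding Llambda_def by simp
qed

lemma Llambda_in_setmul:
  assumes "e \<in> D x" and "b \<in> D y"
  shows "Llambda D \<theta> (e, x) b \<in> D x \<cdot> D (x + y)"
proof -
  have "Llambda D \<theta> (e, x) b \<in> \<theta> x ` (D (- x) \<cdot> D y)"
    unfolding Llambda_def using setmulI[OF thinv_in[OF assms(1)] assms(2)] by simp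
  then show ?thesis
    unfolding tpa_image .
qed

lemma idem_Llambda:
  assumes "e \<in> D x" and "idem e" and "idem f"
  shows "idem (Llambda D \<theta> (e, x) f)"
  unfolding Llambda_def
  using idem_theta[OF tpa_mult_closed(2)[OF thinv_in[OF assms(1)]]
      idem_mult[OF idem_thinv[OF assms(1,2)] assms(3)]] by simp

lemma smul_skew_thinv:
  assumes "(e, x) \<in> skew D"
  shows "smul D \<theta> (e, x) (thinv D \<theta> x e, - x) = (e, 0)"
  using assms idem_thinv theta_thinv unfolding skew_def smul_def idem_def by simp

lemma skew_inverse_unique:
  assumes s: "(e, x) \<in> skew D" and t: "(f, y) \<in> skew D"
    and sts: "smul D \<theta> (smul D \<theta> (e, x) (f, y)) (e, x) = (e, x)"
    and tst: "smul D \<theta> (smul D \<theta> (f, y) (e, x)) (f, y) = (f, y)"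
  shows "(f, y) = (thinv D \<theta> x e, - x)"
proof -
  let ?e = "thinv D \<theta> x e" and ?f = "thinv D \<theta> (- x) f"
  have e: "e \<in> D x" "idem e" and f: "f \<in> D y" "idem f"
    using s t unfolding skew_def by auto
  have e': "?e \<in> D (- x)" "idem ?e" "\<theta> x ?e = e"
    using thinv_in idem_thinv theta_thinv e by auto
  have "x + y + x = 0 + x"
    using sts unfolding smul_def by simp
  then have y: "y = - x"
    using minus_unique add_right_cancel by metis
  have fD: "f \<in> D (- x)"
    using f(1) y by simp
  have "\<theta> x (?e * f) * e = e"
    using sts y thinv_zero tpa_theta_zero unfolding smul_def by simp
  moreover have "\<theta> x (?e * f) = e * \<theta> x f"
    using tpa_hom[OF e'(1) fD] e'(3) by simp
  moreover have "e * \<theta> x f * e = e * \<theta> x f"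
    using idem_central[OF e(2), of "\<theta> x f"] e(2) unfolding idem_def by (metis mult.assoc)
  ultimately have "\<theta> x (?e * f) = \<theta> x ?e"
    using e'(3) by simp
  then have ef: "?e * f = ?e"
    using inj_onD[OF theta_inj_on] tpa_mult_closed(1)[OF fD] e'(1) by blast
  have "\<theta> (- x) (?f * e) * f = f"
    using tst y thinv_zero tpa_theta_zero unfolding smul_def by simp
  moreover have "\<theta> (- x) (?f * e) = f * ?e"
    using tpa_hom[of ?f "- x" e] thinv_in[OF fD] theta_thinv[OF fD] e(1)
      thinv_idem[OF e] by simp
  ultimately have "f = ?e * f * f"
    using idem_central[OF e'(2), of f] by (simp add: mult.assoc)
  also have "\<dots> = ?e"
    using ef f(2) unfolding idem_def by (simp add: mult.assoc)
  finally show ?thesis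
    using y by simp
qed

lemma sinv_skew:
  assumes s: "(e, x) \<in> skew D"
  shows "sinv D \<theta> (e, x) = (thinv D \<theta> x e, - x)"
  unfolding sinv_def
proof (rule the_equality)
  let ?e = "thinv D \<theta> x e"
  have e: "e \<in> D x" "idem e"
    using s unfolding skew_def by auto
  have e': "?e \<in> D (- x)" "idem ?e"
    using thinv_in idem_thinv e by auto
  have "thinv D \<theta> (- x) ?e = e"
    using thinv_theta[of e "- x"] e(1) thinv_idem[OF e] by simp
  then have "smul D \<theta> (?e, - x) (e, x) = (?e, 0)"
    using smul_skew_thinv[of ?e "- x"] e' unfolding skew_def by simp
  then show "(?e, - x) \<in> skew D \<and>
      smul D \<theta> (smul D \<theta> (e, x) (?e, - x)) (e, x) = (e, x) \<and>
      smul D \<theta> (smul D \<theta> (?e, - x) (e, x)) (?e, - x) = (?e, - x)"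
    using smul_skew_thinv[OF s] e e' thinv_zero tpa_theta_zero
    unfolding skew_def smul_def idem_def by simp
qed (metis s skew_inverse_unique prod.collapse)

end

context
  fixes D :: "'g::group_add \<Rightarrow> 'a set" and \<theta> \<theta>' :: "'g \<Rightarrow> 'a \<Rightarrow> 'a"
    and w w' :: "'g \<Rightarrow> 'g \<Rightarrow> 'a mult" and \<epsilon> :: "'g \<Rightarrow> 'a mult"
  assumes tpa: "twisted_partial_action D \<theta> w"
    and tpa': "twisted_partial_action D \<theta>' w'"
    and eps_unit: "\<And>x. unit_multiplier (D x) (\<epsilon> x)"
    and theta_conj: "\<And>x s. s \<in> D (- x) \<Longrightarrow> \<theta>' x s = mR (minv (D x) (\<epsilon> x)) (mL (\<epsilon> x) (\<theta> x s))"
    and twist_coboundary: "\<And>x y s. s \<in> D (- x) \<cdot> D y \<Longrightarrow>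
      mR (\<epsilon> (x + y)) (mR (w' x y) (\<theta>' x s)) = mR (w x y) (mL (\<epsilon> x) (\<theta> x (mR (\<epsilon> y) s)))"
begin

lemma skew_gauge_Agrp:
  assumes "inverse_semigroup TYPE('a)" and s: "s \<in> skew D"
  shows "skew_gauge \<epsilon> s \<in> Agrp (Lalpha (smul D \<theta> s (sinv D \<theta> s)))"
proof -
  obtain e x where s_eq: "s = (e, x)" and e: "e \<in> D x" "idem e"
    using s unfolding skew_def by auto
  then have "Lalpha (smul D \<theta> s (sinv D \<theta> s)) = e"
    using sinv_skew[OF tpa] smul_skew_thinv[OF tpa] s unfolding Lalpha_def by simp
  then show ?thesis
    using unit_multiplier_idem_Agrp[OF assms(1) eps_unit e] unfolding skew_gauge_def s_eq by simp
qed

lemma thinv_equiv: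
  assumes "(e, x) \<in> skew D"
  shows "thinv D \<theta>' x e = thinv D \<theta> x e"
proof -
  have e: "e \<in> D x" "idem e"
    using assms unfolding skew_def by auto
  then have "\<theta>' x (thinv D \<theta> x e) = e"
    using theta_conj[OF thinv_in[OF tpa e(1)]] theta_thinv[OF tpa e(1)]
      unit_multiplier_idem_fixed[OF eps_unit e] by simp
  then show ?thesis
    using thinv_theta[OF tpa' thinv_in[OF tpa e(1)]] by simp
qed

lemma Llambda_equiv:
  assumes "inverse_semigroup TYPE('a)" and s: "s \<in> skew D"
  shows "Llambda D \<theta>' s a = skew_gauge \<epsilon> s * Llambda D \<theta> s a * ainv (skew_gauge \<epsilon> s)"
proof -
  obtain e x where s_eq: "s = (e, x)" and e: "e \<in> D x" "idem e"
    using s unfolding skew_def by auto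
  let ?e = "thinv D \<theta> x e"
  have ea: "?e * a \<in> D (- x)"
    using tpa_mult_closed(2)[OF tpa thinv_in[OF tpa e(1)]] .
  have "Llambda D \<theta>' s a = \<theta>' x (?e * a)"
    unfolding Llambda_def s_eq using thinv_equiv s s_eq by simp
  also have "\<dots> = mR (minv (D x) (\<epsilon> x)) (mL (\<epsilon> x) (Llambda D \<theta> (e, x) a))"
    unfolding Llambda_def using theta_conj[OF ea] by simp
  also have "\<dots> = mL (\<epsilon> x) e * Llambda D \<theta> (e, x) a * mL (minv (D x) (\<epsilon> x)) e"
    using unit_multiplier_conj[OF eps_unit e] theta_in[OF tpa ea] Llambda_idem_absorb[OF tpa e]
    unfolding Llambda_def by simp
  finally show ?thesis
    using ainv_unit_multiplier_idem[OF assms(1) eps_unit e] unfolding skew_gauge_def s_eq by simp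
qed

lemma Lf_equiv:
  assumes s: "s \<in> skew D" and t: "t \<in> skew D"
  shows "Lf D \<theta>' w' s t * skew_gauge \<epsilon> (smul D \<theta> s t) =
    skew_gauge \<epsilon> s * Llambda D \<theta> s (skew_gauge \<epsilon> t) * Lf D \<theta> w s t"
proof -
  obtain e x where s_eq: "s = (e, x)" and e: "e \<in> D x" "idem e"
    using s unfolding skew_def by auto
  obtain f y where t_eq: "t = (f, y)" and f: "f \<in> D y" "idem f"
    using t unfolding skew_def by auto
  let ?e = "thinv D \<theta> x e" and ?T = "D x \<cdot> D (x + y)"
  let ?k = "Llambda D \<theta> (e, x) f" and ?v = "Llambda D \<theta> (e, x) (mL (\<epsilon> y) f)"
  note eps = unit_multiplier_minv(1)[OF eps_unit]
    and wm = unit_multiplier_minv(1)[OF tpa_unit[OF tpa]]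
    and w'm = unit_multiplier_minv(1)[OF tpa_unit[OF tpa']]
  have T_sub: "?T \<subseteq> D x" "?T \<subseteq> D (x + y)"
    using setmul_subset_left setmul_subset_right tpa_ideal[OF tpa] by blast+
  have \<sigma>: "?e * f \<in> D (- x) \<cdot> D y" "?e * f \<in> D y"
    using setmulI[OF thinv_in[OF tpa e(1)] f(1)] tpa_mult_closed(1)[OF tpa f(1)] by auto
  note k = Llambda_in_setmul[OF tpa e(1) f(1)] idem_Llambda[OF tpa e f(2)]
  have "\<theta>' x (?e * f) \<in> ?T"
    using tpa_image[OF tpa', of x y] \<sigma>(1) by blast
  then have z: "mR (w' x y) (\<theta>' x (?e * f)) \<in> D (x + y)"
    using multiplier_closed(2)[OF w'm] T_sub(2) by blast
  have v: "?v \<in> ?T" "e * ?v = ?v"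
    using Llambda_in_setmul[OF tpa e(1) multiplier_closed(1)[OF eps f(1)]]
      Llambda_idem_absorb[OF tpa e] by simp_all
  have vD: "?v \<in> D x"
    using v(1) T_sub(1) by blast
  have "Lf D \<theta>' w' s t * skew_gauge \<epsilon> (smul D \<theta> s t) =
      mR (w' x y) (\<theta>' x (?e * f)) * mL (\<epsilon> (x + y)) ?k"
    unfolding Lf_def Llambda_def skew_gauge_def smul_def s_eq t_eq using thinv_equiv s s_eq by simp
  also have "\<dots> = mR (\<epsilon> (x + y)) (mR (w' x y) (\<theta>' x (?e * f))) * ?k"
    using multiplier_middle[OF eps z] k(1) T_sub(2) by blast
  also have "\<dots> = mR (w x y) (mL (\<epsilon> x) ?v) * ?k"
    using twist_coboundary[OF \<sigma>(1)] multiplier_right_mult_idem[OF eps f \<sigma>(2)]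
    unfolding Llambda_def by simp
  also have "\<dots> = mR (w x y) (mL (\<epsilon> x) e * ?v) * ?k"
    using multiplier_mL_mult[OF eps e(1) vD] v(2) by simp
  also have "\<dots> = mL (\<epsilon> x) e * ?v * mR (w x y) ?k"
    using multiplier_idem_swap[OF wm _ k] setmul_mult_left_closed[OF tpa_ideal[OF tpa] v(1)]
    by simp
  also have "\<dots> = skew_gauge \<epsilon> s * Llambda D \<theta> s (skew_gauge \<epsilon> t) * Lf D \<theta> w s t"
    unfolding Lf_def Llambda_def skew_gauge_def s_eq t_eq by simp
  finally show ?thesis .
qed

end

end

theorem proposition8p2:
  fixes D D' :: "'g::group_add \<Rightarrow> 'a::semigroup_mult set"
    and \<theta> \<theta>' :: "'g \<Rightarrow> 'a \<Rightarrow> 'a"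
    and w w' :: "'g \<Rightarrow> 'g \<Rightarrow> 'a mult"
  assumes "semilattice_of_groups TYPE('a)"
    and "twisted_partial_action D \<theta> w"
    and "twisted_partial_action D' \<theta>' w'"
    and "twisted_equivalent D \<theta> w D' \<theta>' w'"
  shows "tmod_equivalent (skew D) (smul D \<theta>) (sinv D \<theta>)
           Lalpha (Llambda D \<theta>) (Lf D \<theta> w)
           Lalpha (Llambda D' \<theta>') (Lf D' \<theta>' w')"
proof -
  have inv: "inverse_semigroup TYPE('a)"
    and central: "\<And>e a::'a. idem e \<Longrightarrow> e * a = a * e"
    using assms(1) unfolding semilattice_of_groups_def by blast+
  obtain \<epsilon> where "D' = D"
    and equiv: "\<And>x. unit_multiplier (D x) (\<epsilon> x)"
      "\<And>x s. s \<in> D (- x) \<Longrightarrow> \<theta>' x s = mR (minv (D x) (\<epsilon> x)) (mL (\<epsilon> x) (\<theta> x s))"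
      "\<And>x y s. s \<in> D (- x) \<cdot> D y \<Longrightarrow>
        mR (\<epsilon> (x + y)) (mR (w' x y) (\<theta>' x s)) = mR (w x y) (mL (\<epsilon> x) (\<theta> x (mR (\<epsilon> y) s)))"
    using assms(4) unfolding twisted_equivalent_def by blast
  note equiv_data = central assms(2) assms(3)[unfolded \<open>D' = D\<close>] equiv
  note gauge = skew_gauge_Agrp[of D \<theta> w \<theta>' w' \<epsilon>, OF equiv_data inv]
    Llambda_equiv[of D \<theta> w \<theta>' w' \<epsilon>, OF equiv_data inv]
    Lf_equiv[of D \<theta> w \<theta>' w' \<epsilon>, OF equiv_data]
  show ?thesis
    unfolding tmod_equivalent_def \<open>D' = D\<close>
    by (intro conjI ballI allI exI[of _ "skew_gauge \<epsilon>"] refl) (simp_all add: gauge)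
qed

end
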